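(* Let $G$ be a graph. Then $\lfloor \mathrm{sp}\rfloor(G)=0$ if and only if $G$ is a disjoint union of paths.
   Context: All graphs are finite, have at least one vertex, have no loops, and may have multiple (parallel) edges. A unique shortest path is a shortest $u$–$v$ path $P$ such that every $u$–$v$ path with the same number of vertices is identical to $P$, where two paths with different edge sequences are different even if their vertex sequences agree; a single vertex is a unique shortest path. The parade number $\mathrm{usp}(G)$ is the largest number of vertices of a unique shortest path in $G$. The spectator number is $\mathrm{sp}(G)=|V(G)|-\mathrm{usp}(G)$. A minor of $H$ is any graph obtained from $H$ by a sequence of: deleting an isolated vertex, deleting an edge, contracting an edge that has no edge parallel to it. The spectator floor $\lfloor \mathrm{sp}\rfloor(G)$ is the minimum of $\mathrm{sp}(H)$ over all graphs $H$ of which $G$ is a minor. *)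

theory Defs
  imports Main
begin

text \<open>Parallel edges are distinct edge identities with the same
  endpoints.\<close>

record ('a, 'b) mgraph =
  verts :: "'a set"
  edges :: "'b set"
  ends  :: "'b \<Rightarrow> 'a set"

definition wf_graph :: "('a, 'b) mgraph \<Rightarrow> bool" where
  "wf_graph G \<longleftrightarrow> finite (verts G) \<and> verts G \<noteq> {} \<and> finite (edges G) \<and>
     (\<forall>e\<in>edges G. ends G e \<subseteq> verts G \<and> card (ends G e) = 2)"

text \<open>A u-v path: a list of distinct vertices together with the list of edges
  joining consecutive vertices. Two paths are identical iff both lists agree.\<close>

definition is_path :: "('a, 'b) mgraph \<Rightarrow> 'a \<Rightarrow> 'a \<Rightarrow> 'a list \<Rightarrow> 'b list \<Rightarrow> bool" where
  "is_path G u v vs es \<longleftrightarrow>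
     vs \<noteq> [] \<and> distinct vs \<and> set vs \<subseteq> verts G \<and> hd vs = u \<and> last vs = v \<and>
     length es + 1 = length vs \<and>
     (\<forall>i < length es. es ! i \<in> edges G \<and> ends G (es ! i) = {vs ! i, vs ! Suc i})"

definition is_usp :: "('a, 'b) mgraph \<Rightarrow> 'a \<Rightarrow> 'a \<Rightarrow> 'a list \<Rightarrow> 'b list \<Rightarrow> bool" where
  "is_usp G u v vs es \<longleftrightarrow>
     is_path G u v vs es \<and>
     (\<forall>vs' es'. is_path G u v vs' es' \<longrightarrow> length vs \<le> length vs') \<and>
     (\<forall>vs' es'. is_path G u v vs' es' \<and> length vs' = length vs \<longrightarrow> vs' = vs \<and> es' = es)"

definition usp :: "('a, 'b) mgraph \<Rightarrow> nat" where
  "usp G = Max {length vs | vs. \<exists>u v es. is_usp G u v vs es}"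

definition sp :: "('a, 'b) mgraph \<Rightarrow> nat" where
  "sp G = card (verts G) - usp G"

inductive minor_step :: "('a, 'b) mgraph \<Rightarrow> ('a, 'b) mgraph \<Rightarrow> bool" where
  del_vertex: "\<lbrakk>v \<in> verts H; \<forall>e\<in>edges H. v \<notin> ends H e\<rbrakk>
     \<Longrightarrow> minor_step H (H\<lparr>verts := verts H - {v}\<rparr>)"
| del_edge: "e \<in> edges H \<Longrightarrow> minor_step H (H\<lparr>edges := edges H - {e}\<rparr>)"
| contract: "\<lbrakk>e \<in> edges H; ends H e = {u, v}; u \<noteq> v;
     \<forall>f\<in>edges H. f \<noteq> e \<longrightarrow> ends H f \<noteq> ends H e\<rbrakk>
     \<Longrightarrow> minor_step H \<lparr>verts = verts H - {v}, edges = edges H - {e},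
                          ends = (\<lambda>f. (\<lambda>x. if x = v then u else x) ` ends H f)\<rparr>"

definition graph_iso :: "('a, 'b) mgraph \<Rightarrow> ('c, 'd) mgraph \<Rightarrow> bool" where
  "graph_iso G1 G2 \<longleftrightarrow> (\<exists>f g. bij_betw f (verts G1) (verts G2) \<and>
      bij_betw g (edges G1) (edges G2) \<and>
      (\<forall>e\<in>edges G1. ends G2 (g e) = f ` ends G1 e))"

definition is_minor :: "('c, 'd) mgraph \<Rightarrow> ('a, 'b) mgraph \<Rightarrow> bool" where
  "is_minor G H \<longleftrightarrow> (\<exists>H'. minor_step\<^sup>*\<^sup>* H H' \<and> graph_iso H' G)"

text \<open>Host graphs are taken with vertex and edge identities in nat, which is no
  loss since every finite graph is isomorphic to one of this type.\<close>

definition spec_floor :: "('a, 'b) mgraph \<Rightarrow> nat" where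
  "spec_floor G = (LEAST n. \<exists>H :: (nat, nat) mgraph. wf_graph H \<and> is_minor G H \<and> sp H = n)"

definition disjoint_union_of_paths :: "('a, 'b) mgraph \<Rightarrow> bool" where
  "disjoint_union_of_paths G \<longleftrightarrow> (\<exists>Ps :: 'a list list.
     [] \<notin> set Ps \<and> distinct (concat Ps) \<and> set (concat Ps) = verts G \<and>
     inj_on (ends G) (edges G) \<and>
     ends G ` edges G = {{P ! i, P ! Suc i} | P i. P \<in> set Ps \<and> Suc i < length P})"

end

theory Submission
  imports Defs
begin

text \<open>If \<open>sp H = 0\<close>, then \<open>H\<close> has a unique shortest path through all of its vertices.
  Minimality of this path rules out chords and uniqueness rules out parallel edges, so \<open>H\<close> is
  a simple graph whose edges all join consecutive vertices of one vertex ordering. This property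
  survives deleting vertices and edges, contracting an edge (its ends are consecutive, so one of
  them is simply dropped from the ordering) and isomorphism, and it is equivalent to being a
  disjoint union of paths. Conversely, a disjoint union of paths on \<open>n\<close> vertices arises from
  the path \<open>P\<^sub>n\<close> by deleting edges, and \<open>sp P\<^sub>n = 0\<close>.\<close>

fun adj_pairs :: "'a list \<Rightarrow> 'a set set" where
  "adj_pairs (x # y # xs) = insert {x, y} (adj_pairs (y # xs))"
| "adj_pairs _ = {}"

lemma adj_pairs_Cons: "adj_pairs (x # xs) = (if xs = [] then {} else insert {x, hd xs} (adj_pairs xs))"
  by (cases xs) auto

lemma adj_pairs_append:
  "adj_pairs (xs @ ys) =
     adj_pairs xs \<union> adj_pairs ys \<union> (if xs = [] \<or> ys = [] then {} else {{last xs, hd ys}})"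
  by (induction xs rule: adj_pairs.induct) (auto simp: adj_pairs_Cons)

lemma adj_pairs_subset_set: "p \<in> adj_pairs xs \<Longrightarrow> p \<subseteq> set xs"
  by (induction xs rule: adj_pairs.induct) auto

lemma adj_pairs_conv_zip: "adj_pairs xs = (\<lambda>(a, b). {a, b}) ` set (zip xs (tl xs))"
  by (induction xs rule: adj_pairs.induct) auto

lemma adj_pairs_conv_nth: "adj_pairs xs = {{xs ! i, xs ! Suc i} | i. Suc i < length xs}"
  by (force simp: adj_pairs_conv_zip set_zip nth_tl)

lemma adj_pairs_map: "adj_pairs (map f xs) = (`) f ` adj_pairs xs"
  by (induction xs rule: adj_pairs.induct) auto

lemma adj_pairs_filter: "p \<in> adj_pairs xs \<Longrightarrow> \<forall>x\<in>p. P x \<Longrightarrow> p \<in> adj_pairs (filter P xs)"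
proof (induction xs rule: adj_pairs.induct)
  case (1 x y xs)
  show ?case
  proof (cases "p = {x, y}")
    case True then show ?thesis using "1.prems" by (simp add: adj_pairs_Cons)
  next
    case False
    then have "p \<in> adj_pairs (filter P (y # xs))" using 1 by simp
    then show ?thesis by (auto simp: adj_pairs_Cons)
  qed
qed auto

lemma adj_pairs_concat: "\<Union> (adj_pairs ` set xss) \<subseteq> adj_pairs (concat xss)"
  by (induction xss) (auto simp: adj_pairs_append)

lemma finite_adj_pairs [simp]: "finite (adj_pairs xs)"
  by (induction xs rule: adj_pairs.induct) auto

lemma card_adj_pairs: "distinct xs \<Longrightarrow> card (adj_pairs xs) = length xs - 1"
proof (induction xs rule: adj_pairs.induct)
  case (1 x y xs)
  then have "{x, y} \<notin> adj_pairs (y # xs)" using adj_pairs_subset_set by fastforce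
  then show ?case using 1 by simp
qed auto

lemma adj_pairs_memE:
  assumes "p \<in> adj_pairs xs"
  obtains ys a b zs where "xs = ys @ a # b # zs" "p = {a, b}"
  using assms
proof (induction xs arbitrary: thesis rule: adj_pairs.induct)
  case (1 x y xs)
  show ?case
  proof (cases "p = {x, y}")
    case True then show ?thesis using "1.prems"(1)[of "[]"] by simp
  next
    case False then show ?thesis using 1 by (metis append_Cons insert_iff adj_pairs.simps(1))
  qed
qed auto

lemma singleton_notin_adj_pairs: "distinct xs \<Longrightarrow> {x} \<notin> adj_pairs xs"
  by (induction xs rule: adj_pairs.induct) (auto simp: doubleton_eq_iff)

lemma adj_pairs_contract:
  assumes "distinct xs" "{u, v} \<in> adj_pairs xs" "u \<noteq> v"
  defines "\<sigma> \<equiv> \<lambda>x. if x = v then u else x"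
  shows "(`) \<sigma> ` (adj_pairs xs - {{u, v}}) = adj_pairs (removeAll v xs)"
    and "inj_on ((`) \<sigma>) (adj_pairs xs - {{u, v}})"
proof -
  obtain ys a b zs where xs: "xs = ys @ a # b # zs" and ab: "{u, v} = {a, b}"
    using adj_pairs_memE[OF assms(2)] by blast
  have v: "v \<notin> set ys" "v \<notin> set zs"
    using assms(1) ab unfolding xs by (auto simp: doubleton_eq_iff)
  have "map \<sigma> xs = ys @ u # u # zs"
    using v ab unfolding xs \<sigma>_def by (auto simp: doubleton_eq_iff intro!: map_idI)
  moreover have xs': "removeAll v xs = ys @ u # zs"
    using v ab assms(3) unfolding xs by (auto simp: doubleton_eq_iff)
  moreover have "adj_pairs (ys @ u # u # zs) = insert {u} (adj_pairs (ys @ u # zs))"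
    by (auto simp: adj_pairs_append adj_pairs_Cons)
  ultimately have image_adj_pairs: "(`) \<sigma> ` adj_pairs xs = insert {u} (adj_pairs (removeAll v xs))"
    by (simp add: adj_pairs_map[symmetric])
  have "\<sigma> ` {u, v} = {u}" unfolding \<sigma>_def by auto
  with assms(2) have "(`) \<sigma> ` adj_pairs xs = insert {u} ((`) \<sigma> ` (adj_pairs xs - {{u, v}}))"
    by (metis image_insert insert_Diff)
  with image_adj_pairs
  have "adj_pairs (removeAll v xs) \<subseteq> insert {u} ((`) \<sigma> ` (adj_pairs xs - {{u, v}}))"
    by (metis subset_insertI)
  moreover have "{u} \<notin> adj_pairs (removeAll v xs)"
    using assms(1) by (simp add: singleton_notin_adj_pairs distinct_removeAll)
  ultimately have sub: "adj_pairs (removeAll v xs) \<subseteq> (`) \<sigma> ` (adj_pairs xs - {{u, v}})"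
    by (simp add: subset_insert)
  txt \<open>Both sides have \<open>length xs - 2\<close> elements, so the inclusion is an equality and
    the map is injective.\<close>
  have "card (adj_pairs (removeAll v xs)) = length (removeAll v xs) - 1"
    using assms(1) by (simp add: card_adj_pairs distinct_removeAll)
  moreover have "length (removeAll v xs) + 1 = length xs"
    using xs' unfolding xs by simp
  ultimately have "card (adj_pairs (removeAll v xs)) = length xs - 2"
    by simp
  moreover have "card (adj_pairs xs - {{u, v}}) = length xs - 2"
    using assms(1,2) by (simp add: card_adj_pairs)
  ultimately have card_eq: "card (adj_pairs xs - {{u, v}}) = card (adj_pairs (removeAll v xs))"
    by simp
  then have "card ((`) \<sigma> ` (adj_pairs xs - {{u, v}})) \<le> card (adj_pairs (removeAll v xs))"
    using card_image_le[of "adj_pairs xs - {{u, v}}"] by simp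
  with sub show "(`) \<sigma> ` (adj_pairs xs - {{u, v}}) = adj_pairs (removeAll v xs)"
    by (intro card_seteq[symmetric]) auto
  with card_eq show "inj_on ((`) \<sigma>) (adj_pairs xs - {{u, v}})"
    by (simp add: eq_card_imp_inj_on)
qed

lemma adj_pairs_split:
  "A \<subseteq> adj_pairs xs \<Longrightarrow>
    \<exists>xss. [] \<notin> set xss \<and> concat xss = xs \<and> \<Union> (adj_pairs ` set xss) = A"
proof (induction xs arbitrary: A)
  case Nil
  then show ?case by (intro exI[of _ "[]"]) auto
next
  case (Cons x xs)
  show ?case
  proof (cases "xs = []")
    case True
    with Cons.prems show ?thesis by (intro exI[of _ "[[x]]"]) auto
  next
    case False
    have "A - {{x, hd xs}} \<subseteq> adj_pairs xs"
      using Cons.prems False by (auto simp: adj_pairs_Cons)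
    then obtain xss where xss: "[] \<notin> set xss" "concat xss = xs"
      "\<Union> (adj_pairs ` set xss) = A - {{x, hd xs}}"
      using Cons.IH by blast
    with False obtain ys yss where yss: "xss = ys # yss" "ys \<noteq> []" "hd ys = hd xs"
      by (cases xss) fastforce+
    show ?thesis
    proof (cases "{x, hd xs} \<in> A")
      case True
      have "\<Union> (adj_pairs ` set ((x # ys) # yss)) = insert {x, hd xs} (\<Union> (adj_pairs ` set xss))"
        using yss by (auto simp: adj_pairs_Cons)
      also have "\<dots> = A"
        using xss(3) True by auto
      finally show ?thesis
        using xss yss by (intro exI[of _ "(x # ys) # yss"]) auto
    next
      case False
      with xss show ?thesis by (intro exI[of _ "[x] # xss"]) auto
    qed
  qed
qed

text \<open>Unlike the blocks in \<open>disjoint_union_of_paths\<close>, a single vertex ordering is stable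
  under contraction.\<close>

definition path_ordered :: "('a, 'b) mgraph \<Rightarrow> 'a list \<Rightarrow> bool" where
  "path_ordered H xs \<longleftrightarrow> distinct xs \<and> set xs = verts H \<and>
     inj_on (ends H) (edges H) \<and> ends H ` edges H \<subseteq> adj_pairs xs"

lemma Union_adj_pairs_conv_nth:
  "\<Union> (adj_pairs ` set xss) = {{P ! i, P ! Suc i} | P i. P \<in> set xss \<and> Suc i < length P}"
  unfolding adj_pairs_conv_nth by blast

lemma disjoint_union_of_paths_iff_path_ordered:
  "disjoint_union_of_paths G \<longleftrightarrow> (\<exists>xs. path_ordered G xs)"
proof
  assume "disjoint_union_of_paths G"
  then obtain xss where "distinct (concat xss)" "set (concat xss) = verts G"
    "inj_on (ends G) (edges G)" "ends G ` edges G = \<Union> (adj_pairs ` set xss)"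
    unfolding disjoint_union_of_paths_def Union_adj_pairs_conv_nth[symmetric] by blast
  then have "path_ordered G (concat xss)"
    unfolding path_ordered_def using adj_pairs_concat by simp
  then show "\<exists>xs. path_ordered G xs" ..
next
  assume "\<exists>xs. path_ordered G xs"
  then obtain xs where xs: "path_ordered G xs" ..
  then obtain xss where "[] \<notin> set xss" "concat xss = xs"
    "\<Union> (adj_pairs ` set xss) = ends G ` edges G"
    using adj_pairs_split unfolding path_ordered_def by meson
  with xs show "disjoint_union_of_paths G"
    unfolding disjoint_union_of_paths_def Union_adj_pairs_conv_nth[symmetric] path_ordered_def
    by metis
qed

lemma path_ordered_minor_step:
  assumes "minor_step H H'" "path_ordered H xs"
  shows "\<exists>xs'. path_ordered H' xs'"
  using assms(1)
proof cases
  case (del_vertex v)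
  have "ends H ` edges H \<subseteq> adj_pairs (removeAll v xs)"
    using assms(2) del_vertex(3) adj_pairs_filter[of _ xs "\<lambda>x. v \<noteq> x"]
    unfolding path_ordered_def removeAll_filter_not_eq by blast
  with assms(2) have "path_ordered H' (removeAll v xs)"
    unfolding path_ordered_def del_vertex(1) by (simp add: distinct_removeAll)
  then show ?thesis ..
next
  case (del_edge e)
  with assms(2) have "path_ordered H' xs"
    unfolding path_ordered_def by (auto intro: inj_on_subset)
  then show ?thesis ..
next
  case (contract e u v)
  define \<sigma> where "\<sigma> = (\<lambda>x. if x = v then u else x)"
  have H': "verts H' = verts H - {v}" "edges H' = edges H - {e}" "ends H' = (\<lambda>f. \<sigma> ` ends H f)"
    unfolding contract(1) \<sigma>_def by simp_all
  have xs: "distinct xs" "set xs = verts H" "inj_on (ends H) (edges H)" "ends H ` edges H \<subseteq> adj_pairs xs"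
    using assms(2) unfolding path_ordered_def by blast+
  have uv: "{u, v} \<in> adj_pairs xs"
    using xs(4) contract(2,3) by force
  have D: "ends H ` (edges H - {e}) \<subseteq> adj_pairs xs - {{u, v}}"
    using xs(3,4) contract(2,3) by (auto dest: inj_onD)
  note contract_adj_pairs = adj_pairs_contract[OF xs(1) uv contract(4), folded \<sigma>_def]
  have "ends H' ` edges H' = (`) \<sigma> ` ends H ` (edges H - {e})"
    unfolding H' by auto
  also have "\<dots> \<subseteq> adj_pairs (removeAll v xs)"
    using image_mono[OF D, of "(`) \<sigma>"] contract_adj_pairs(1) by simp
  finally have ends': "ends H' ` edges H' \<subseteq> adj_pairs (removeAll v xs)" .
  have "inj_on ((`) \<sigma> \<circ> ends H) (edges H - {e})"
    using inj_on_subset[OF xs(3)] inj_on_subset[OF contract_adj_pairs(2) D] by (intro comp_inj_on) auto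
  then have "inj_on (ends H') (edges H')"
    unfolding H' by (simp add: comp_def)
  with xs ends' have "path_ordered H' (removeAll v xs)"
    unfolding path_ordered_def H' by (simp add: distinct_removeAll)
  then show ?thesis ..
qed

lemma path_ordered_graph_iso:
  assumes "graph_iso H G" "path_ordered H xs"
  shows "\<exists>ys. path_ordered G ys"
proof -
  obtain f g where f: "bij_betw f (verts H) (verts G)" and g: "bij_betw g (edges H) (edges G)"
    and fg: "\<forall>e\<in>edges H. ends G (g e) = f ` ends H e"
    using assms(1) unfolding graph_iso_def by blast
  have xs: "distinct xs" "set xs = verts H" "inj_on (ends H) (edges H)" "ends H ` edges H \<subseteq> adj_pairs xs"
    using assms(2) unfolding path_ordered_def by blast+
  have inj_f: "inj_on f (verts H)"
    using f bij_betw_def by blast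
  have ends_verts: "ends H e \<subseteq> verts H" if "e \<in> edges H" for e
    using xs(2,4) adj_pairs_subset_set that by blast
  have "edges G = g ` edges H"
    using g by (simp add: bij_betw_def)
  then have ends_G: "ends G ` edges G = (`) f ` ends H ` edges H"
    using fg by (auto simp: image_image)
  have "inj_on (ends G) (edges G)"
  proof (rule inj_onI)
    fix x y assume "x \<in> edges G" "y \<in> edges G" "ends G x = ends G y"
    then obtain a b where ab: "a \<in> edges H" "b \<in> edges H" "x = g a" "y = g b"
      "f ` ends H a = f ` ends H b"
      using \<open>edges G = g ` edges H\<close> fg by (metis imageE)
    then have "ends H a = ends H b"
      using inj_on_image_eq_iff[OF inj_f ends_verts ends_verts] by blast
    with ab xs(3) show "x = y" by (auto dest: inj_onD)
  qed
  moreover have "ends G ` edges G \<subseteq> adj_pairs (map f xs)"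
    unfolding ends_G adj_pairs_map using xs(4) by blast
  moreover have "distinct (map f xs)" "set (map f xs) = verts G"
    using xs(1,2) inj_f f by (auto simp: distinct_map bij_betw_def)
  ultimately have "path_ordered G (map f xs)"
    unfolding path_ordered_def by blast
  then show ?thesis ..
qed

lemma disjoint_union_of_paths_minor:
  assumes "disjoint_union_of_paths H" "is_minor G H"
  shows "disjoint_union_of_paths G"
proof -
  obtain H' where steps: "minor_step\<^sup>*\<^sup>* H H'" and iso: "graph_iso H' G"
    using assms(2) unfolding is_minor_def by blast
  from steps have "\<exists>xs. path_ordered H' xs"
    using assms(1) unfolding disjoint_union_of_paths_iff_path_ordered
    by induction (use path_ordered_minor_step in blast)+
  then show ?thesis
    using path_ordered_graph_iso[OF iso] disjoint_union_of_paths_iff_path_ordered by blast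
qed

lemma length_path_le_card:
  "is_path G u v vs es \<Longrightarrow> finite (verts G) \<Longrightarrow> length vs \<le> card (verts G)"
  unfolding is_path_def by (metis card_mono distinct_card)

lemma is_usp_singleton: "x \<in> verts G \<Longrightarrow> is_usp G x x [x] []"
  unfolding is_usp_def is_path_def by (auto simp: length_Suc_conv)

lemma finite_usp_lengths:
  "finite (verts G) \<Longrightarrow> finite {length vs | vs. \<exists>u v es. is_usp G u v vs es}"
  by (rule finite_subset[of _ "{..card (verts G)}"])
    (auto simp: is_usp_def dest: length_path_le_card)

lemma length_le_usp: "wf_graph G \<Longrightarrow> is_usp G u v vs es \<Longrightarrow> length vs \<le> usp G"
  unfolding usp_def wf_graph_def by (rule Max_ge) (auto intro: finite_usp_lengths)

lemma usp_attained:
  assumes "wf_graph G"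
  obtains u v vs es where "is_usp G u v vs es" "length vs = usp G"
proof -
  let ?lengths = "{length vs | vs. \<exists>u v es. is_usp G u v vs es}"
  obtain x where "x \<in> verts G"
    using assms unfolding wf_graph_def by blast
  then have "length [x] \<in> ?lengths"
    using is_usp_singleton by fast
  then have "usp G \<in> ?lengths"
    unfolding usp_def using assms finite_usp_lengths unfolding wf_graph_def
    by (intro Max_in) auto
  then show ?thesis
    using that by auto
qed

lemma hamiltonian_usp_if_sp_eq_0:
  assumes "wf_graph G" "sp G = 0"
  obtains u v vs es where "is_usp G u v vs es" "set vs = verts G"
proof -
  obtain u v vs es where usp: "is_usp G u v vs es" "length vs = usp G"
    using usp_attained[OF assms(1)] .
  then have "distinct vs" "set vs \<subseteq> verts G" "length vs \<ge> card (verts G)"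
    using assms(2) unfolding is_usp_def is_path_def sp_def by auto
  moreover have "finite (verts G)"
    using assms(1) unfolding wf_graph_def by blast
  ultimately have "set vs = verts G"
    by (metis card_seteq distinct_card)
  with usp that show ?thesis by blast
qed

lemma is_path_shortcut:
  assumes p: "is_path G u v vs es" and ij: "Suc i < j" "j < length vs"
    and e: "e \<in> edges G" "ends G e = {vs ! i, vs ! j}"
  shows "is_path G u v (take (Suc i) vs @ drop j vs) (take i es @ e # drop j es)"
proof -
  let ?vs = "take (Suc i) vs @ drop j vs" and ?es = "take i es @ e # drop j es"
  have P: "vs \<noteq> []" "distinct vs" "set vs \<subseteq> verts G" "hd vs = u" "last vs = v"
    "length es + 1 = length vs"
    "\<And>k. k < length es \<Longrightarrow> es ! k \<in> edges G \<and> ends G (es ! k) = {vs ! k, vs ! Suc k}"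
    using p unfolding is_path_def by auto
  have lengths: "length ?vs = Suc i + (length vs - j)" "length ?es = Suc i + (length vs - Suc j)"
    using ij P(6) by auto
  have vs_nth: "?vs ! k = (if k \<le> i then vs ! k else vs ! (j + k - Suc i))" if "k < length ?vs" for k
    using that ij by (auto simp: nth_append)
  have es_nth: "?es ! k = (if k < i then es ! k else if k = i then e else es ! (j + k - Suc i))"
    if "k < length ?es" for k
    using that ij P(6) by (auto simp: nth_append nth_Cons' min_def)
  have "?es ! k \<in> edges G \<and> ends G (?es ! k) = {?vs ! k, ?vs ! Suc k}" if k: "k < length ?es" for k
  proof (cases "i < k")
    case True
    then have "j + k - Suc i < length es" "Suc (j + k - Suc i) = j + Suc k - Suc i"
      using k lengths ij P(6) by auto
    with True show ?thesis
      using es_nth[OF k] vs_nth[of k] vs_nth[of "Suc k"] k lengths P(7) by auto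
  next
    case False
    then show ?thesis
      using es_nth[OF k] vs_nth[of k] vs_nth[of "Suc k"] k lengths P(6,7) e ij by auto
  qed
  moreover have "distinct ?vs"
    using P(2) set_take_disj_set_drop_if_distinct[OF P(2), of "Suc i" j] ij by simp
  moreover have "set ?vs \<subseteq> verts G"
    using P(3) set_take_subset[of "Suc i" vs] set_drop_subset[of j vs] by auto
  moreover have "hd ?vs = u" "last ?vs = v"
    using P(1,4,5) ij by (simp_all add: hd_append hd_take)
  ultimately show ?thesis
    unfolding is_path_def using lengths ij by (simp only:) simp
qed

lemma shortest_path_no_chord:
  assumes "is_path G u v vs es" "\<forall>vs' es'. is_path G u v vs' es' \<longrightarrow> length vs \<le> length vs'"
    and "e \<in> edges G" "ends G e = {vs ! i, vs ! j}" "i < j" "j < length vs"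
  shows "j = Suc i"
proof (rule ccontr)
  assume "j \<noteq> Suc i"
  with assms(5) have "Suc i < j" by simp
  then have "is_path G u v (take (Suc i) vs @ drop j vs) (take i es @ e # drop j es)"
    by (rule is_path_shortcut[OF assms(1) _ assms(6,3,4)])
  then have "length vs \<le> length (take (Suc i) vs @ drop j vs)"
    by (rule assms(2)[rule_format])
  with \<open>Suc i < j\<close> assms(6) show False by simp
qed

lemma usp_edge_eq_nth:
  assumes "is_usp G u v vs es" "f \<in> edges G" "ends G f = {vs ! i, vs ! Suc i}" "Suc i < length vs"
  shows "f = es ! i"
proof -
  have p: "is_path G u v vs es"
    using assms(1) unfolding is_usp_def by blast
  then have "i < length es"
    using assms(4) unfolding is_path_def by simp
  with p assms(2,3) have "is_path G u v vs (es[i := f])"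
    unfolding is_path_def by (auto simp: nth_list_update)
  with assms(1) have "es[i := f] = es"
    unfolding is_usp_def by blast
  with \<open>i < length es\<close> show ?thesis
    by (metis nth_list_update_eq)
qed

lemma path_ordered_if_hamiltonian_usp:
  assumes wf: "wf_graph G" and usp: "is_usp G u v vs es" and ham: "set vs = verts G"
  shows "path_ordered G vs"
proof -
  have p: "is_path G u v vs es"
    and shortest: "\<forall>vs' es'. is_path G u v vs' es' \<longrightarrow> length vs \<le> length vs'"
    using usp unfolding is_usp_def by blast+
  have "distinct vs"
    using p unfolding is_path_def by blast
  have consecutive: "\<exists>i. Suc i < length vs \<and> ends G e = {vs ! i, vs ! Suc i}"
    if e: "e \<in> edges G" for e
  proof -
    obtain a b where ab: "ends G e = {a, b}" "a \<noteq> b" "a \<in> set vs" "b \<in> set vs"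
      using wf e ham unfolding wf_graph_def by (metis card_2_iff insert_subset)
    then obtain i j where ij: "i < length vs" "j < length vs" "vs ! i = a" "vs ! j = b"
      by (meson in_set_conv_nth)
    have chord: "j = Suc i" if "i < j" "ends G e = {vs ! i, vs ! j}" "j < length vs" for i j
      using shortest_path_no_chord[OF p shortest e that(2,1,3)] .
    consider "i < j" | "j < i"
      using ij ab(2) by (cases i j rule: linorder_cases) auto
    then show ?thesis
    proof cases
      case 1
      with ij ab chord[of i j] show ?thesis by auto
    next
      case 2
      with ij ab chord[of j i] show ?thesis by (auto simp: insert_commute)
    qed
  qed
  have "inj_on (ends G) (edges G)"
  proof (rule inj_onI)
    fix e f assume ef: "e \<in> edges G" "f \<in> edges G" "ends G e = ends G f"
    then obtain i where i: "Suc i < length vs" "ends G e = {vs ! i, vs ! Suc i}"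
      using consecutive by blast
    with ef have "e = es ! i" "f = es ! i"
      using usp_edge_eq_nth[OF usp] by metis+
    then show "e = f" by simp
  qed
  moreover have "ends G ` edges G \<subseteq> adj_pairs vs"
    unfolding adj_pairs_conv_nth using consecutive by blast
  ultimately show ?thesis
    unfolding path_ordered_def using \<open>distinct vs\<close> ham by blast
qed

definition path_graph :: "nat \<Rightarrow> (nat, nat) mgraph" where
  "path_graph n = \<lparr>verts = {0..<n}, edges = {0..<n - 1}, ends = (\<lambda>i. {i, Suc i})\<rparr>"

lemma wf_path_graph: "0 < n \<Longrightarrow> wf_graph (path_graph n)"
  unfolding wf_graph_def path_graph_def by auto

lemma path_graph_path_nth:
  assumes p: "is_path (path_graph n) 0 w vs es" and k: "k < length vs"
  shows "vs ! k = k"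
  using k
proof (induction k rule: less_induct)
  case (less k)
  show ?case
  proof (cases k)
    case 0
    have "vs \<noteq> []" "hd vs = 0"
      using p unfolding is_path_def by auto
    with 0 show ?thesis
      by (metis hd_conv_nth)
  next
    case (Suc m)
    have "m < length es" "distinct vs"
      using p less.prems Suc unfolding is_path_def by auto
    then have "{es ! m, Suc (es ! m)} = {m, vs ! k}"
      using p less.IH[of m] less.prems Suc unfolding is_path_def path_graph_def by auto
    then consider "vs ! k = Suc m" | "Suc (vs ! k) = m"
      by (auto simp: doubleton_eq_iff)
    then show ?thesis
    proof cases
      case 2
      then have "vs ! k = vs ! (m - 1)"
        using less.IH[of "m - 1"] less.prems Suc by simp
      with \<open>distinct vs\<close> less.prems Suc have False
        by (simp add: nth_eq_iff_index_eq)
      then show ?thesis ..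
    qed (use Suc in simp)
  qed
qed

lemma path_graph_path_eq:
  assumes p: "is_path (path_graph n) 0 w vs es"
  shows "vs = [0..<length vs]" "es = [0..<length es]"
proof -
  show vs: "vs = [0..<length vs]"
    by (rule nth_equalityI) (simp_all add: path_graph_path_nth[OF p])
  have "es ! k = k" if k: "k < length es" for k
  proof -
    have "{es ! k, Suc (es ! k)} = {k, Suc k}"
      using p k path_graph_path_nth[OF p, of k] path_graph_path_nth[OF p, of "Suc k"]
      unfolding is_path_def path_graph_def by simp
    then show ?thesis
      by (auto simp: doubleton_eq_iff)
  qed
  then show "es = [0..<length es]"
    by (intro nth_equalityI) simp_all
qed

lemma is_usp_path_graph: "0 < n \<Longrightarrow> is_usp (path_graph n) 0 (n - 1) [0..<n] [0..<n - 1]"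
proof -
  assume "0 < n"
  have length_vs: "length vs = n" if "is_path (path_graph n) 0 (n - 1) vs es" for vs es
  proof -
    have "vs \<noteq> []" "last vs = n - 1"
      using that unfolding is_path_def by auto
    with path_graph_path_eq(1)[OF that] \<open>0 < n\<close> show ?thesis
      by (metis Suc_diff_1 last_upt length_greater_0_conv length_upt minus_nat.diff_0)
  qed
  have unique: "vs = [0..<n] \<and> es = [0..<n - 1]" if "is_path (path_graph n) 0 (n - 1) vs es" for vs es
  proof -
    have "length es + 1 = length vs"
      using that unfolding is_path_def by blast
    with path_graph_path_eq[OF that] length_vs[OF that] show ?thesis
      by (metis add_diff_cancel_right')
  qed
  have "is_path (path_graph n) 0 (n - 1) [0..<n] [0..<n - 1]"
    unfolding is_path_def path_graph_def using \<open>0 < n\<close> by (auto simp: hd_upt last_upt)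
  with length_vs unique show ?thesis
    unfolding is_usp_def by (metis order_refl)
qed

lemma sp_path_graph: "0 < n \<Longrightarrow> sp (path_graph n) = 0"
  using length_le_usp[OF wf_path_graph is_usp_path_graph]
  unfolding sp_def path_graph_def by simp

lemma minor_steps_delete_edges:
  "finite D \<Longrightarrow> D \<subseteq> edges H \<Longrightarrow> minor_step\<^sup>*\<^sup>* H (H\<lparr>edges := edges H - D\<rparr>)"
proof (induction D rule: finite_induct)
  case empty
  then show ?case by simp
next
  case (insert e D)
  then have "e \<in> edges (H\<lparr>edges := edges H - D\<rparr>)"
    by simp
  from minor_step.del_edge[OF this]
  have "minor_step (H\<lparr>edges := edges H - D\<rparr>) (H\<lparr>edges := edges H - D - {e}\<rparr>)"
    by simp
  moreover have "edges H - D - {e} = edges H - insert e D"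
    by blast
  ultimately have "minor_step (H\<lparr>edges := edges H - D\<rparr>) (H\<lparr>edges := edges H - insert e D\<rparr>)"
    by metis
  with insert show ?case
    by (meson insert_subset rtranclp.rtrancl_into_rtrancl)
qed

lemma is_minor_path_graph_if_path_ordered:
  assumes "path_ordered G xs"
  shows "is_minor G (path_graph (length xs))"
proof -
  define n where "n = length xs"
  define pair where "pair i = {xs ! i, xs ! Suc i}" for i
  define E where "E = {i \<in> {0..<n - 1}. pair i \<in> ends G ` edges G}"
  define H where "H = (path_graph n)\<lparr>edges := edges (path_graph n) - ({0..<n - 1} - E)\<rparr>"
  have xs: "distinct xs" "set xs = verts G" "inj_on (ends G) (edges G)" "ends G ` edges G \<subseteq> adj_pairs xs"
    using assms unfolding path_ordered_def by blast+
  have steps: "minor_step\<^sup>*\<^sup>* (path_graph n) H"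
    unfolding H_def by (rule minor_steps_delete_edges) (auto simp: path_graph_def)
  have H: "verts H = {0..<n}" "edges H = E" "ends H = (\<lambda>i. {i, Suc i})"
    unfolding H_def path_graph_def E_def by auto
  have adj_pairs_xs: "adj_pairs xs = pair ` {0..<n - 1}"
    unfolding adj_pairs_conv_nth pair_def n_def by auto
  then have "inj_on pair {0..<n - 1}"
    using card_adj_pairs[OF xs(1)] by (intro eq_card_imp_inj_on) (simp_all add: n_def)
  moreover have "pair ` E = ends G ` edges G"
  proof
    show "pair ` E \<subseteq> ends G ` edges G"
      unfolding E_def by blast
    show "ends G ` edges G \<subseteq> pair ` E"
    proof
      fix p assume p: "p \<in> ends G ` edges G"
      then obtain i where "i \<in> {0..<n - 1}" "p = pair i"
        using xs(4) unfolding adj_pairs_xs by blast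
      with p show "p \<in> pair ` E"
        unfolding E_def by blast
    qed
  qed
  ultimately have "bij_betw pair E (ends G ` edges G)"
    unfolding bij_betw_def E_def by (auto intro: inj_on_subset)
  then have g: "bij_betw (inv_into (edges G) (ends G) \<circ> pair) E (edges G)"
    using bij_betw_inv_into[OF inj_on_imp_bij_betw[OF xs(3)]] by (rule bij_betw_trans)
  have f: "bij_betw (nth xs) {0..<n} (verts G)"
    using xs(1,2) unfolding n_def by (intro bij_betw_nth) auto
  have "ends G ((inv_into (edges G) (ends G) \<circ> pair) i) = (nth xs) ` {i, Suc i}" if "i \<in> E" for i
    using that unfolding E_def pair_def by (auto simp: f_inv_into_f)
  with f g H have "graph_iso H G"
    unfolding graph_iso_def by metis
  with steps show ?thesis
    unfolding is_minor_def n_def by blast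
qed

definition relabel ::
    "'c set \<Rightarrow> ('c \<Rightarrow> 'a) \<Rightarrow> 'd set \<Rightarrow> ('d \<Rightarrow> 'b) \<Rightarrow> ('a, 'b) mgraph \<Rightarrow> ('c, 'd) mgraph"
  where "relabel A f B g G = \<lparr>verts = A, edges = B, ends = (\<lambda>i. inv_into A f ` ends G (g i))\<rparr>"

lemma
  assumes G: "wf_graph G" and f: "bij_betw f A (verts G)" and g: "bij_betw g B (edges G)"
  shows wf_graph_relabel: "wf_graph (relabel A f B g G)"
    and graph_iso_relabel: "graph_iso (relabel A f B g G) G"
proof -
  have ends_G: "ends G (g i) \<subseteq> verts G" "card (ends G (g i)) = 2" if "i \<in> B" for i
    using G g that unfolding wf_graph_def bij_betw_def by auto
  have f': "bij_betw (inv_into A f) (verts G) A"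
    using f by (rule bij_betw_inv_into)
  have "finite A" "A \<noteq> {}" "finite B"
    using G bij_betw_finite[OF f] bij_betw_finite[OF g] f unfolding wf_graph_def bij_betw_def by auto
  moreover have "inv_into A f ` ends G (g i) \<subseteq> A" if "i \<in> B" for i
    using ends_G[OF that] f' unfolding bij_betw_def by blast
  moreover have "card (inv_into A f ` ends G (g i)) = 2" if "i \<in> B" for i
    using ends_G[OF that] f' by (metis bij_betw_def card_image inj_on_subset)
  ultimately show "wf_graph (relabel A f B g G)"
    unfolding wf_graph_def relabel_def by simp
  have "f ` inv_into A f ` ends G (g i) = ends G (g i)" if "i \<in> B" for i
    using ends_G[OF that] f unfolding bij_betw_def by (simp add: image_inv_into_cancel)
  with f g show "graph_iso (relabel A f B g G) G"
    unfolding graph_iso_def relabel_def by (intro exI[of _ f] exI[of _ g]) simp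
qed

lemma ex_nat_graph_iso:
  assumes "wf_graph G"
  obtains H :: "(nat, nat) mgraph" where "wf_graph H" "graph_iso H G"
proof -
  have "finite (verts G)" "finite (edges G)"
    using assms unfolding wf_graph_def by blast+
  then obtain f g where "bij_betw f {0..<card (verts G)} (verts G)" "bij_betw g {0..<card (edges G)} (edges G)"
    using ex_bij_betw_nat_finite by metis
  with assms that show ?thesis
    using wf_graph_relabel graph_iso_relabel by blast
qed

text \<open>Without a host graph the \<open>LEAST\<close> in \<open>spec_floor\<close> would be unspecified.\<close>

lemma spec_floor_attained:
  assumes "wf_graph G"
  obtains H :: "(nat, nat) mgraph" where "wf_graph H" "is_minor G H" "sp H = spec_floor G"
proof -
  obtain H0 :: "(nat, nat) mgraph" where "wf_graph H0" "graph_iso H0 G"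
    using ex_nat_graph_iso[OF assms] .
  then have "\<exists>H :: (nat, nat) mgraph. wf_graph H \<and> is_minor G H \<and> sp H = sp H0"
    unfolding is_minor_def by blast
  then have "\<exists>H :: (nat, nat) mgraph. wf_graph H \<and> is_minor G H \<and> sp H = spec_floor G"
    unfolding spec_floor_def by (rule LeastI)
  with that show ?thesis
    by blast
qed

theorem proposition6p1:
  fixes G :: "('a, 'b) mgraph"
  assumes "wf_graph G"
  shows "spec_floor G = 0 \<longleftrightarrow> disjoint_union_of_paths G"
proof
  assume "spec_floor G = 0"
  with spec_floor_attained[OF assms] obtain H :: "(nat, nat) mgraph"
    where H: "wf_graph H" "is_minor G H" "sp H = 0"
    by metis
  then obtain u v vs es where "is_usp H u v vs es" "set vs = verts H"
    using hamiltonian_usp_if_sp_eq_0 by blast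
  then have "disjoint_union_of_paths H"
    using path_ordered_if_hamiltonian_usp[OF H(1)] disjoint_union_of_paths_iff_path_ordered by blast
  then show "disjoint_union_of_paths G"
    using H(2) by (rule disjoint_union_of_paths_minor)
next
  assume "disjoint_union_of_paths G"
  then obtain xs where xs: "path_ordered G xs"
    unfolding disjoint_union_of_paths_iff_path_ordered ..
  then have "0 < length xs"
    using assms unfolding path_ordered_def wf_graph_def by auto
  with is_minor_path_graph_if_path_ordered[OF xs] show "spec_floor G = 0"
    unfolding spec_floor_def using wf_path_graph sp_path_graph by (intro Least_eq_0) blast
qed

end
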